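(* Let $B\in\mathbb{R}^{n\times n}$ be a nonsingular $M$-matrix and $C\in\mathbb{R}^{n\times n}$ an $M$-matrix such that $B^{-1}C\ge 0$, and suppose that $B-C-I$ is a nonsingular $M$-matrix. Let $\Phi$ be the maximal nonpositive solvent of $X^2+BX+C=0$ and $\Psi$ the maximal nonpositive solvent of the dual equation $CY^2+BY+I=0$ (these exist under the stated hypotheses). Let $u\in\mathbb{R}^n$ be any positive vector such that $v:=(B-C-I)u>0$. Then: (a) $\Phi\le -B^{-1}C\le 0$, $-\Phi u\le u-B^{-1}v$, $\Psi\le -B^{-1}\le 0$, and $-\Psi u\le u-B^{-1}v$; (b) $\rho(\Phi)<1$ and $\rho(\Psi)<1$; (c) $I-\Phi\Psi$ and $I-\Psi\Phi$ are nonsingular $M$-matrices.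
   Context: $\rho(\cdot)$ denotes spectral radius. Inequalities between matrices and vectors are entrywise; a vector is positive if all entries are positive. A matrix is nonpositive if all its entries are $\le 0$. A solvent of a matrix equation is a matrix solution; the maximal nonpositive solvent is a nonpositive solvent $\Phi$ with $X\le\Phi$ entrywise for every nonpositive solvent $X$. A $Z$-matrix is a real square matrix with nonpositive off-diagonal entries; a $Z$-matrix $A=sI-N$ with $N\ge 0$ is an $M$-matrix if $s\ge\rho(N)$ and a nonsingular $M$-matrix if $s>\rho(N)$. *)

theory Defs
  imports "Jordan_Normal_Form.Spectral_Radius"
begin

definition rho :: "real mat \<Rightarrow> real" where
  "rho A = spectral_radius (map_mat complex_of_real A)"

definition mat_inv :: "real mat \<Rightarrow> real mat" where
  "mat_inv A = (THE X. X \<in> carrier_mat (dim_row A) (dim_row A) \<and>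
                      A * X = 1\<^sub>m (dim_row A) \<and> X * A = 1\<^sub>m (dim_row A))"

definition pos_vec :: "real vec \<Rightarrow> bool" where
  "pos_vec v = (\<forall>i < dim_vec v. v $ i > 0)"

definition nonpos_mat :: "real mat \<Rightarrow> bool" where
  "nonpos_mat A = (\<forall>i < dim_row A. \<forall>j < dim_col A. A $$ (i,j) \<le> 0)"

definition Z_matrix :: "nat \<Rightarrow> real mat \<Rightarrow> bool" where
  "Z_matrix n A = (A \<in> carrier_mat n n \<and> (\<forall>i<n. \<forall>j<n. i \<noteq> j \<longrightarrow> A $$ (i,j) \<le> 0))"

definition M_matrix :: "nat \<Rightarrow> real mat \<Rightarrow> bool" where
  "M_matrix n A = (Z_matrix n A \<and> (\<exists>s N. N \<in> carrier_mat n n \<and> 0\<^sub>m n n \<le> N \<and>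
       A = s \<cdot>\<^sub>m 1\<^sub>m n - N \<and> s \<ge> rho N))"

definition nonsing_M_matrix :: "nat \<Rightarrow> real mat \<Rightarrow> bool" where
  "nonsing_M_matrix n A = (Z_matrix n A \<and> (\<exists>s N. N \<in> carrier_mat n n \<and> 0\<^sub>m n n \<le> N \<and>
       A = s \<cdot>\<^sub>m 1\<^sub>m n - N \<and> s > rho N))"

definition max_nonpos_solvent :: "nat \<Rightarrow> real mat \<Rightarrow> real mat \<Rightarrow> real mat \<Rightarrow> bool" where
  "max_nonpos_solvent n B C P = (P \<in> carrier_mat n n \<and> nonpos_mat P \<and>
      P * P + B * P + C = 0\<^sub>m n n \<and>
      (\<forall>X \<in> carrier_mat n n. nonpos_mat X \<and> X * X + B * X + C = 0\<^sub>m n n \<longrightarrow> X \<le> P))"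

definition max_nonpos_solvent_dual :: "nat \<Rightarrow> real mat \<Rightarrow> real mat \<Rightarrow> real mat \<Rightarrow> bool" where
  "max_nonpos_solvent_dual n B C P = (P \<in> carrier_mat n n \<and> nonpos_mat P \<and>
      C * (P * P) + B * P + 1\<^sub>m n = 0\<^sub>m n n \<and>
      (\<forall>Y \<in> carrier_mat n n. nonpos_mat Y \<and> C * (Y * Y) + B * Y + 1\<^sub>m n = 0\<^sub>m n n \<longrightarrow> Y \<le> P))"

end

(*
  Write H = B^-1 and G = B^-1 C; both are nonnegative, H because B is a nonsingular M-matrix.
  Multiplying by H turns the two equations into the fixed-point equations
  X = -G - H X^2 and Y = -H - G Y^2, and the choice of u gives (G + H) u = u - H v with H v > 0.

  For nonnegative P, Q with P u + Q u <= u, the iteration S |-> P + Q S^2 started at 0 increases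
  to a nonnegative solution W of W = P + Q W^2 with W u <= u. Since -W is a nonpositive solution,
  the maximal one satisfies 0 <= -X <= W, hence -X u = P u + Q X^2 u <= P u + Q u = u - H v.
  This gives (a). A matrix whose entrywise absolute value strictly shrinks a positive vector has
  spectral radius below 1; applied to Phi, Psi and to Phi Psi = (-Phi)(-Psi) it gives (b) and (c).
*)
theory Submission
  imports Defs
begin

section \<open>Entrywise order on matrices and vectors\<close>

lemma index_mult_mat_sum:
  assumes "A \<in> carrier_mat n m" "B \<in> carrier_mat m p" "i < n" "j < p"
  shows "(A * B) $$ (i,j) = (\<Sum>k<m. A $$ (i,k) * B $$ (k,j))"
  using assms by (simp add: scalar_prod_def atLeast0LessThan)

lemma index_mult_mat_vec_sum:
  assumes "A \<in> carrier_mat n m" "v \<in> carrier_vec m" "i < n"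
  shows "(A *\<^sub>v v) $ i = (\<Sum>k<m. A $$ (i,k) * v $ k)"
  using assms by (simp add: scalar_prod_def atLeast0LessThan)

lemma pos_vecD: "pos_vec v \<Longrightarrow> i < dim_vec v \<Longrightarrow> 0 < v $ i"
  by (simp add: pos_vec_def)

lemma nonneg_mat_iff:
  "A \<in> carrier_mat n m \<Longrightarrow> 0\<^sub>m n m \<le> A \<longleftrightarrow> (\<forall>i<n. \<forall>j<m. 0 \<le> A $$ (i,j))"
  by (auto simp: less_eq_mat_def)

lemma nonpos_mat_iff_nonneg_uminus:
  "A \<in> carrier_mat n m \<Longrightarrow> nonpos_mat A \<longleftrightarrow> 0\<^sub>m n m \<le> - A"
  by (auto simp: less_eq_mat_def nonpos_mat_def)

lemma uminus_le_0_iff_nonneg: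
  fixes A :: "'a :: ordered_ab_group_add mat"
  shows "A \<in> carrier_mat n m \<Longrightarrow> - A \<le> 0\<^sub>m n m \<longleftrightarrow> 0\<^sub>m n m \<le> A"
  by (auto simp: less_eq_mat_def)

lemma uminus_eq_diff_iff:
  fixes A B C :: "'a :: ab_group_add mat"
  assumes "A \<in> carrier_mat n m" "B \<in> carrier_mat n m" "C \<in> carrier_mat n m"
  shows "- A = - B - C \<longleftrightarrow> A = B + C"
  using assms by (auto simp: mat_eq_iff algebra_simps)

lemma add_eq_0_iff_eq_diff:
  fixes A Y G :: "'a :: ab_group_add mat"
  assumes "A \<in> carrier_mat n m" "Y \<in> carrier_mat n m" "G \<in> carrier_mat n m"
  shows "A + Y + G = 0\<^sub>m n m \<longleftrightarrow> Y = - G - A"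
  using assms by (auto simp: mat_eq_iff) (simp_all add: algebra_simps eq_neg_iff_add_eq_0)

lemma left_invertible_mult_eq_0_iff:
  fixes B Bi M :: "'a :: semiring_1 mat"
  assumes "B \<in> carrier_mat n n" "Bi \<in> carrier_mat n n" "B * Bi = 1\<^sub>m n" "M \<in> carrier_mat n m"
  shows "Bi * M = 0\<^sub>m n m \<longleftrightarrow> M = 0\<^sub>m n m"
proof
  assume "Bi * M = 0\<^sub>m n m"
  then have "B * (Bi * M) = 0\<^sub>m n m" using assms(1) by simp
  then show "M = 0\<^sub>m n m" using assms by (simp add: assoc_mult_mat[symmetric, of B n n Bi n M m])
qed (use assms(2,4) in simp)

lemma mult_mat_mono:
  fixes A A' B B' :: "'a :: linordered_semiring mat"
  assumes "A \<in> carrier_mat n m" "A' \<in> carrier_mat n m" "B \<in> carrier_mat m p" "B' \<in> carrier_mat m p"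
    and "0\<^sub>m n m \<le> A" "A \<le> A'" "0\<^sub>m m p \<le> B" "B \<le> B'"
  shows "A * B \<le> A' * B'"
proof -
  have "(A * B) $$ (i,j) \<le> (A' * B') $$ (i,j)" if "i < n" "j < p" for i j
    unfolding index_mult_mat_sum[OF assms(1,3) that] index_mult_mat_sum[OF assms(2,4) that]
  proof (rule sum_mono)
    fix k assume "k \<in> {..<m}"
    with assms that have "0 \<le> A $$ (i,k)" "A $$ (i,k) \<le> A' $$ (i,k)"
      "0 \<le> B $$ (k,j)" "B $$ (k,j) \<le> B' $$ (k,j)"
      by (auto simp: less_eq_mat_def)
    then show "A $$ (i,k) * B $$ (k,j) \<le> A' $$ (i,k) * B' $$ (k,j)"
      by (intro mult_mono) (auto intro: order_trans)
  qed
  with assms show ?thesis by (auto simp: less_eq_mat_def)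
qed

lemma mult_mat_nonneg:
  fixes A B :: "'a :: linordered_semiring mat"
  assumes "A \<in> carrier_mat n m" "B \<in> carrier_mat m p" "0\<^sub>m n m \<le> A" "0\<^sub>m m p \<le> B"
  shows "0\<^sub>m n p \<le> A * B"
  using assms unfolding less_eq_mat_def by (auto simp: scalar_prod_def intro!: sum_nonneg)

lemma mult_mat_vec_mono:
  fixes A :: "'a :: linordered_semiring mat"
  assumes "A \<in> carrier_mat n m" "0\<^sub>m n m \<le> A" "x \<le> y" "y \<in> carrier_vec m"
  shows "A *\<^sub>v x \<le> A *\<^sub>v y"
  using assms unfolding less_eq_mat_def less_eq_vec_def
  by (auto simp: scalar_prod_def intro!: sum_mono mult_left_mono)

lemma mult_mat_vec_left_mono:
  fixes A B :: "'a :: linordered_semiring mat"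
  assumes "A \<in> carrier_mat n m" "A \<le> B" "v \<in> carrier_vec m" "0\<^sub>v m \<le> v"
  shows "A *\<^sub>v v \<le> B *\<^sub>v v"
  using assms unfolding less_eq_mat_def less_eq_vec_def
  by (auto simp: scalar_prod_def intro!: sum_mono mult_right_mono)

lemma mult_mat_vec_nonneg:
  fixes A :: "'a :: linordered_semiring mat"
  assumes "A \<in> carrier_mat n m" "0\<^sub>m n m \<le> A" "v \<in> carrier_vec m" "0\<^sub>v m \<le> v"
  shows "0\<^sub>v n \<le> A *\<^sub>v v"
  using mult_mat_vec_mono[OF assms(1,2,4,3)] assms(1) by (simp add: less_eq_vec_def)

lemma pos_vec_diff_if_le_diff:
  fixes x z u :: "real vec"
  assumes "x \<in> carrier_vec n" "z \<in> carrier_vec n" "u \<in> carrier_vec n" "x \<le> u - z" "pos_vec z"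
  shows "pos_vec (u - x)"
proof -
  have "x $ i < u $ i" if "i < n" for i
  proof -
    have "x $ i \<le> u $ i - z $ i" "0 < z $ i" using assms that by (auto simp: pos_vec_def less_eq_vec_def)
    then show ?thesis by linarith
  qed
  then show ?thesis using assms(1,3) by (simp add: pos_vec_def)
qed

lemma pow_mat_nonneg:
  fixes A :: "'a :: linordered_semiring_1 mat"
  assumes A: "A \<in> carrier_mat n n" and nonneg: "0\<^sub>m n n \<le> A"
  shows "0\<^sub>m n n \<le> A ^\<^sub>m k"
proof (induction k)
  case (Suc k)
  then show ?case using mult_mat_nonneg[OF pow_carrier_mat[OF A] A _ nonneg] by simp
qed (use A in \<open>auto simp: less_eq_mat_def\<close>)

lemma pow_mat_Suc_left:
  assumes A: "A \<in> carrier_mat n n"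
  shows "A ^\<^sub>m Suc k = A * A ^\<^sub>m k"
proof (induction k)
  case (Suc k)
  have "A ^\<^sub>m Suc (Suc k) = (A * A ^\<^sub>m k) * A" using Suc by simp
  also have "\<dots> = A * A ^\<^sub>m Suc k" using A by (simp add: assoc_mult_mat[of _ n n _ n _ n])
  finally show ?case .
qed (use A in simp)

lemma smult_mat_mult_mat_vec:
  fixes A :: "'a :: comm_ring_1 mat"
  assumes "A \<in> carrier_mat n m" "v \<in> carrier_vec m"
  shows "(c \<cdot>\<^sub>m A) *\<^sub>v v = c \<cdot>\<^sub>v (A *\<^sub>v v)"
  using assms by (intro eq_vecI) (auto simp: scalar_prod_def sum_distrib_left ac_simps)

lemma pow_mat_smult:
  fixes A :: "'a :: comm_ring_1 mat"
  assumes A: "A \<in> carrier_mat n n"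
  shows "(c \<cdot>\<^sub>m A) ^\<^sub>m k = c ^ k \<cdot>\<^sub>m A ^\<^sub>m k"
proof (induction k)
  case (Suc k)
  then show ?case using A
    by (auto simp: mult_smult_assoc_mat[of _ n n _ n] mult_smult_distrib[of _ n n _ n] intro!: eq_matI)
qed (use A in \<open>auto intro!: eq_matI\<close>)

lemma diff_le_self_if_pos_vec:
  fixes z u :: "real vec"
  assumes "z \<in> carrier_vec n" "pos_vec z" "u \<in> carrier_vec n"
  shows "u - z \<le> u"
  using assms by (auto simp: pos_vec_def less_eq_vec_def less_imp_le)

lemma left_inverse_mult_vec_diff:
  fixes B C Bi :: "real mat"
  assumes B: "B \<in> carrier_mat n n" and C: "C \<in> carrier_mat n n"
    and Bi: "Bi \<in> carrier_mat n n" "Bi * B = 1\<^sub>m n" and u: "u \<in> carrier_vec n"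
  shows "(Bi * C) *\<^sub>v u + Bi *\<^sub>v u = u - Bi *\<^sub>v ((B - C - 1\<^sub>m n) *\<^sub>v u)"
proof -
  have D: "B - C - 1\<^sub>m n \<in> carrier_mat n n" using B C by (intro minus_carrier_mat) auto
  have "Bi * (B - C - 1\<^sub>m n) = Bi * (B - C) - Bi * 1\<^sub>m n"
    using Bi(1) B C by (intro mult_minus_distrib_mat) auto
  also have "\<dots> = 1\<^sub>m n - Bi * C - Bi"
    using Bi B C by (simp add: mult_minus_distrib_mat[OF Bi(1) B C])
  finally have "Bi *\<^sub>v ((B - C - 1\<^sub>m n) *\<^sub>v u) = (1\<^sub>m n - Bi * C - Bi) *\<^sub>v u"
    using assoc_mult_mat_vec[OF Bi(1) D u] by simp
  also have "\<dots> = (1\<^sub>m n - Bi * C) *\<^sub>v u - Bi *\<^sub>v u"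
    by (rule minus_mult_distrib_mat_vec) (use Bi(1) C u in auto)
  also have "(1\<^sub>m n - Bi * C) *\<^sub>v u = u - (Bi * C) *\<^sub>v u"
    using minus_mult_distrib_mat_vec[OF one_carrier_mat mult_carrier_mat[OF Bi(1) C] u] u by simp
  finally show ?thesis using Bi(1) C u by (intro eq_vecI) auto
qed

lemma mat_inv_eqI:
  fixes A X :: "real mat"
  assumes A: "A \<in> carrier_mat n n" and X: "X \<in> carrier_mat n n" and AX: "A * X = 1\<^sub>m n"
  shows "mat_inv A = X"
  unfolding mat_inv_def
proof (rule the_equality)
  show "X \<in> carrier_mat (dim_row A) (dim_row A) \<and> A * X = 1\<^sub>m (dim_row A) \<and> X * A = 1\<^sub>m (dim_row A)"
    using A X AX mat_mult_left_right_inverse[OF A X AX] by simp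
  fix Y assume "Y \<in> carrier_mat (dim_row A) (dim_row A) \<and> A * Y = 1\<^sub>m (dim_row A) \<and> Y * A = 1\<^sub>m (dim_row A)"
  then have Y: "Y \<in> carrier_mat n n" "Y * A = 1\<^sub>m n" using A by auto
  have "Y = Y * (A * X)" using Y AX by simp
  also have "\<dots> = X" using assoc_mult_mat[OF Y(1) A X] Y X by simp
  finally show "Y = X" .
qed

lemma mat_inv_if_det_nonzero:
  fixes A :: "real mat"
  assumes A: "A \<in> carrier_mat n n" and det: "det A \<noteq> 0"
  shows "mat_inv A \<in> carrier_mat n n" "A * mat_inv A = 1\<^sub>m n" "mat_inv A * A = 1\<^sub>m n"
proof -
  obtain X where X: "X \<in> carrier_mat n n" "A * X = 1\<^sub>m n"
    using det_non_zero_imp_unit[OF A det, of undefined] unfolding Units_def ring_mat_simps by blast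
  then show "mat_inv A \<in> carrier_mat n n" "A * mat_inv A = 1\<^sub>m n" "mat_inv A * A = 1\<^sub>m n"
    using mat_inv_eqI[OF A X] mat_mult_left_right_inverse[OF A X(1)] by auto
qed

lemma tendsto_index_mult_mat:
  fixes X Y :: "nat \<Rightarrow> real mat"
  assumes X: "\<And>k. X k \<in> carrier_mat n m" "X' \<in> carrier_mat n m"
    and Y: "\<And>k. Y k \<in> carrier_mat m p" "Y' \<in> carrier_mat m p"
    and limX: "\<And>i j. i < n \<Longrightarrow> j < m \<Longrightarrow> (\<lambda>k. X k $$ (i,j)) \<longlonglongrightarrow> X' $$ (i,j)"
    and limY: "\<And>i j. i < m \<Longrightarrow> j < p \<Longrightarrow> (\<lambda>k. Y k $$ (i,j)) \<longlonglongrightarrow> Y' $$ (i,j)"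
    and ij: "i < n" "j < p"
  shows "(\<lambda>k. (X k * Y k) $$ (i,j)) \<longlonglongrightarrow> (X' * Y') $$ (i,j)"
  unfolding index_mult_mat_sum[OF X(1) Y(1) ij] index_mult_mat_sum[OF X(2) Y(2) ij]
  using ij by (intro tendsto_sum tendsto_mult limX limY) auto

section \<open>Spectral radius\<close>

lemma rho_nonneg:
  assumes "A \<in> carrier_mat n n" "n > 0"
  shows "0 \<le> rho A"
  using spectral_radius_mem_max(1)[of "map_mat complex_of_real A" n] assms
  unfolding rho_def by auto

lemma rho_smult_le:
  fixes A :: "real mat"
  assumes A: "A \<in> carrier_mat n n" and n: "n > 0" and c: "c > 0"
  shows "rho (c \<cdot>\<^sub>m A) \<le> c * rho A"
proof -
  define Ac where "Ac = map_mat complex_of_real A"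
  have Ac: "Ac \<in> carrier_mat n n" using A by (simp add: Ac_def)
  have cAc: "map_mat complex_of_real (c \<cdot>\<^sub>m A) = complex_of_real c \<cdot>\<^sub>m Ac"
    by (rule eq_matI) (auto simp: Ac_def)
  obtain ev where "ev \<in> spectrum (complex_of_real c \<cdot>\<^sub>m Ac)" and rho: "rho (c \<cdot>\<^sub>m A) = cmod ev"
    using spectral_radius_mem_max(1)[of "complex_of_real c \<cdot>\<^sub>m Ac" n] Ac n
    unfolding rho_def cAc by auto
  then obtain x where x: "x \<in> carrier_vec n" "x \<noteq> 0\<^sub>v n" "(complex_of_real c \<cdot>\<^sub>m Ac) *\<^sub>v x = ev \<cdot>\<^sub>v x"
    using Ac by (auto simp: spectrum_def eigenvalue_def eigenvector_def)
  have "Ac *\<^sub>v x = (1 / complex_of_real c) \<cdot>\<^sub>v (complex_of_real c \<cdot>\<^sub>v (Ac *\<^sub>v x))"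
    using c by (simp add: smult_smult_assoc)
  also have "\<dots> = (ev / complex_of_real c) \<cdot>\<^sub>v x"
    using x(3) by (simp add: smult_mat_mult_mat_vec[OF Ac x(1)] smult_smult_assoc)
  finally have "Ac *\<^sub>v x = (ev / complex_of_real c) \<cdot>\<^sub>v x" .
  then have "ev / complex_of_real c \<in> spectrum Ac"
    using x Ac by (auto simp: spectrum_def eigenvalue_def eigenvector_def)
  then have "cmod (ev / complex_of_real c) \<le> rho A"
    using spectral_radius_mem_max(2)[OF Ac n] unfolding rho_def Ac_def by auto
  then show ?thesis using c rho by (simp add: norm_divide pos_divide_le_eq mult.commute)
qed

lemma pow_mat_tendsto_0_if_rho_less_1:
  fixes A :: "real mat"
  assumes A: "A \<in> carrier_mat n n" and rho: "rho A < 1" and ij: "i < n" "j < n"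
  shows "(\<lambda>k. (A ^\<^sub>m k) $$ (i,j)) \<longlonglongrightarrow> 0"
proof -
  have n: "n > 0" using ij by simp
  \<comment> \<open>The powers of A / t are bounded for rho A < t < 1, and A^k = t^k (A / t)^k.\<close>
  define t where "t = (rho A + 1) / 2"
  have t: "0 < t" "t < 1" "rho A < t" using rho rho_nonneg[OF A n] by (auto simp: t_def)
  define R where "R = (1 / t) \<cdot>\<^sub>m A"
  have R: "R \<in> carrier_mat n n" using A by (simp add: R_def)
  have "rho R \<le> rho A / t" using rho_smult_le[OF A n, of "1 / t"] t by (simp add: R_def)
  also have "\<dots> < 1" using t by simp
  finally obtain c where c: "\<And>k. norm_bound (map_mat complex_of_real R ^\<^sub>m k) c"
    using spectral_radius_jnf_norm_bound_less_1_upper_triangular[of _ n] R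
    unfolding rho_def by (metis map_carrier_mat)
  have bound: "norm ((A ^\<^sub>m k) $$ (i,j)) \<le> norm (t ^ k) * c" for k
  proof -
    have "A = t \<cdot>\<^sub>m R" using t by (auto simp: R_def intro!: eq_matI)
    then have "(A ^\<^sub>m k) $$ (i,j) = t ^ k * (R ^\<^sub>m k) $$ (i,j)"
      using pow_mat_smult[OF R] R ij by simp
    moreover have "\<bar>(R ^\<^sub>m k) $$ (i,j)\<bar> \<le> c"
      using c[of k] ij R unfolding of_real_hom.mat_hom_pow[OF R, symmetric] norm_bound_def by auto
    ultimately show ?thesis using t by (simp add: abs_mult mult_left_mono)
  qed
  have "(\<lambda>k. t ^ k) \<longlonglongrightarrow> 0" using t by (intro LIMSEQ_power_zero) auto
  then show ?thesis by (rule tendsto_0_le[where K = c]) (intro always_eventually allI bound)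
qed

lemma cmod_eigenvalue_less_1_if_weighted_rows_less:
  fixes A :: "real mat"
  assumes A: "A \<in> carrier_mat n n" and u: "pos_vec u" "u \<in> carrier_vec n"
    and rows: "\<And>i. i < n \<Longrightarrow> (\<Sum>j<n. \<bar>A $$ (i,j)\<bar> * u $ j) < u $ i"
    and x: "x \<in> carrier_vec n" "x \<noteq> 0\<^sub>v n" "map_mat complex_of_real A *\<^sub>v x = ev \<cdot>\<^sub>v x"
  shows "cmod ev < 1"
proof -
  obtain j where j: "j < n" "x $ j \<noteq> 0"
    using x(1,2) by (metis eq_vecI index_zero_vec carrier_vecD)
  have upos: "0 < u $ k" if "k < n" for k using pos_vecD[OF u(1)] u(2) that by simp
  \<comment> \<open>Read the eigenvalue equation in a row i maximising |x i| / u i.\<close>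
  define M where "M = (MAX k\<in>{..<n}. cmod (x $ k) / u $ k)"
  have "M \<in> (\<lambda>k. cmod (x $ k) / u $ k) ` {..<n}" unfolding M_def using j(1) by (intro Max_in) auto
  then obtain i where i: "i < n" and M: "M = cmod (x $ i) / u $ i" by auto
  have bound: "cmod (x $ k) \<le> M * u $ k" if "k < n" for k
  proof -
    have "cmod (x $ k) / u $ k \<le> M" unfolding M_def using that by (intro Max_ge) auto
    then show ?thesis using upos[OF that] by (simp add: pos_divide_le_eq)
  qed
  have "0 < M"
    using bound[OF j(1)] j upos[OF j(1)] by (smt (verit) mult_nonpos_nonneg zero_less_norm_iff)
  have "ev * x $ i = (map_mat complex_of_real A *\<^sub>v x) $ i" using x(1,3) i by simp
  also have "\<dots> = (\<Sum>k<n. complex_of_real (A $$ (i,k)) * x $ k)"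
    using A i x(1) by (subst index_mult_mat_vec_sum[of _ n n]) (auto intro: sum.cong)
  finally have "cmod ev * cmod (x $ i) = cmod (\<Sum>k<n. complex_of_real (A $$ (i,k)) * x $ k)"
    by (metis norm_mult)
  also have "\<dots> \<le> (\<Sum>k<n. \<bar>A $$ (i,k)\<bar> * cmod (x $ k))"
    by (rule order_trans[OF norm_sum]) (simp add: norm_mult)
  also have "\<dots> \<le> (\<Sum>k<n. \<bar>A $$ (i,k)\<bar> * (M * u $ k))"
    by (intro sum_mono mult_left_mono bound) auto
  also have "\<dots> = M * (\<Sum>k<n. \<bar>A $$ (i,k)\<bar> * u $ k)"
    by (simp add: sum_distrib_left algebra_simps)
  also have "\<dots> < M * u $ i" using rows[OF i] \<open>0 < M\<close> by simp
  also have "\<dots> = cmod (x $ i)" using upos[OF i] by (simp add: M)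
  finally have "cmod ev * cmod (x $ i) < 1 * cmod (x $ i)" by simp
  moreover have "0 < cmod (x $ i)" using M \<open>0 < M\<close> upos[OF i] by (simp add: zero_less_divide_iff)
  ultimately show ?thesis by (simp add: mult_less_cancel_right)
qed

lemma rho_less_1_if_abs_contracts:
  fixes A :: "real mat"
  assumes A: "A \<in> carrier_mat n n" and n: "n > 0"
    and u: "u \<in> carrier_vec n" "pos_vec u" and contr: "pos_vec (u - map_mat abs A *\<^sub>v u)"
  shows "rho A < 1"
proof -
  have absA: "map_mat abs A \<in> carrier_mat n n" using A by simp
  have rows: "(\<Sum>j<n. \<bar>A $$ (i,j)\<bar> * u $ j) < u $ i" if i: "i < n" for i
  proof -
    have "(map_mat abs A *\<^sub>v u) $ i = (\<Sum>j<n. \<bar>A $$ (i,j)\<bar> * u $ j)"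
      unfolding index_mult_mat_vec_sum[OF absA u(1) i] using A i by (intro sum.cong) auto
    with pos_vecD[OF contr, of i] i u(1) A show ?thesis by simp
  qed
  define Ac where "Ac = map_mat complex_of_real A"
  have Ac: "Ac \<in> carrier_mat n n" using A by (simp add: Ac_def)
  obtain ev where "ev \<in> spectrum Ac" and rho: "rho A = cmod ev"
    using spectral_radius_mem_max(1)[OF Ac n] unfolding rho_def Ac_def by auto
  then obtain x where "x \<in> carrier_vec n" "x \<noteq> 0\<^sub>v n" "Ac *\<^sub>v x = ev \<cdot>\<^sub>v x"
    using Ac by (auto simp: spectrum_def eigenvalue_def eigenvector_def)
  from cmod_eigenvalue_less_1_if_weighted_rows_less[OF A u(2,1) rows this[unfolded Ac_def]]
  show ?thesis unfolding rho .
qed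

lemma rho_nonpos_less_1:
  fixes X :: "real mat"
  assumes X: "X \<in> carrier_mat n n" "nonpos_mat X" and n: "n > 0"
    and u: "u \<in> carrier_vec n" "pos_vec u" and z: "z \<in> carrier_vec n" "pos_vec z"
    and Xu: "(- X) *\<^sub>v u \<le> u - z"
  shows "rho X < 1"
proof (rule rho_less_1_if_abs_contracts[OF X(1) n u])
  have "map_mat abs X = - X" using X by (intro eq_matI) (auto simp: nonpos_mat_def)
  then show "pos_vec (u - map_mat abs X *\<^sub>v u)"
    using X(1) u(1) z Xu by (auto intro: pos_vec_diff_if_le_diff[of _ n z])
qed

section \<open>Z-matrices and M-matrices\<close>

lemma Z_matrix_mult_vec_at_min_ratio:
  assumes Z: "Z_matrix n A" and w: "w \<in> carrier_vec n" "pos_vec w"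
    and x: "x \<in> carrier_vec n" and n: "n > 0"
  obtains i where "i < n" "\<And>j. j < n \<Longrightarrow> x $ i / w $ i \<le> x $ j / w $ j"
    "(A *\<^sub>v x) $ i \<le> x $ i / w $ i * (A *\<^sub>v w) $ i"
proof -
  have A: "A \<in> carrier_mat n n" using Z by (simp add: Z_matrix_def)
  have wpos: "w $ k > 0" if "k < n" for k using w that by (simp add: pos_vec_def)
  have "\<exists>i. is_arg_min (\<lambda>j. x $ j / w $ j) (\<lambda>j. j \<in> {..<n}) i"
    using n by (intro ex_is_arg_min_if_finite) auto
  then obtain i where i: "i < n" and "\<forall>j<n. \<not> x $ j / w $ j < x $ i / w $ i"
    by (auto simp: is_arg_min_def)
  then have min: "x $ i / w $ i \<le> x $ j / w $ j" if "j < n" for j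
    using that by (simp add: not_less)
  define m where "m = x $ i / w $ i"
  \<comment> \<open>x - m w is nonnegative and vanishes at i, while row i of A is nonpositive off the diagonal.\<close>
  have "A $$ (i,k) * x $ k \<le> A $$ (i,k) * (m * w $ k)" if k: "k < n" for k
  proof (cases "k = i")
    case False
    have "m * w $ k \<le> x $ k" using min[OF k] wpos[OF k] by (simp add: m_def pos_le_divide_eq)
    with False k i Z show ?thesis by (auto simp: Z_matrix_def intro: mult_left_mono_neg)
  qed (use wpos[OF i] in \<open>simp add: m_def\<close>)
  then have "(A *\<^sub>v x) $ i \<le> (\<Sum>k<n. A $$ (i,k) * (m * w $ k))"
    unfolding index_mult_mat_vec_sum[OF A x i] by (intro sum_mono) auto
  also have "\<dots> = m * (A *\<^sub>v w) $ i"
    by (simp add: index_mult_mat_vec_sum[OF A w(1) i] sum_distrib_left algebra_simps)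
  finally show ?thesis using that i min by (simp add: m_def)
qed

lemma Z_matrix_nonneg_if_mult_nonneg:
  assumes Z: "Z_matrix n A" and w: "w \<in> carrier_vec n" "pos_vec w" "pos_vec (A *\<^sub>v w)"
    and x: "x \<in> carrier_vec n" and Ax: "0\<^sub>v n \<le> A *\<^sub>v x"
  shows "0\<^sub>v n \<le> x"
proof (cases "n = 0")
  case False
  have A: "A \<in> carrier_mat n n" using Z by (simp add: Z_matrix_def)
  obtain i where i: "i < n" and min: "\<And>j. j < n \<Longrightarrow> x $ i / w $ i \<le> x $ j / w $ j"
    and le: "(A *\<^sub>v x) $ i \<le> x $ i / w $ i * (A *\<^sub>v w) $ i"
    using Z_matrix_mult_vec_at_min_ratio[OF Z w(1,2) x] False by blast
  have "0 \<le> (A *\<^sub>v x) $ i" and Aw: "0 < (A *\<^sub>v w) $ i"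
    using Ax w(3) A i by (auto simp: less_eq_vec_def pos_vec_def)
  with le have "0 \<le> x $ i / w $ i * (A *\<^sub>v w) $ i" by linarith
  with Aw have "0 \<le> x $ i / w $ i" using zero_le_mult_iff[of "x $ i / w $ i" "(A *\<^sub>v w) $ i"] by linarith
  then have "0 \<le> x $ j" if j: "j < n" for j
  proof -
    have "0 \<le> x $ j / w $ j" using min[OF j] \<open>0 \<le> x $ i / w $ i\<close> by linarith
    moreover have "0 < w $ j" using w j by (simp add: pos_vec_def)
    ultimately show ?thesis by (auto simp: zero_le_divide_iff)
  qed
  with x show ?thesis by (auto simp: less_eq_vec_def)
qed (use x in \<open>auto simp: less_eq_vec_def\<close>)

lemma Z_matrix_pos_if_mult_pos:
  assumes Z: "Z_matrix n A" and w: "w \<in> carrier_vec n" "pos_vec w" "pos_vec (A *\<^sub>v w)"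
    and x: "x \<in> carrier_vec n" and Ax: "pos_vec (A *\<^sub>v x)"
  shows "pos_vec x"
proof (cases "n = 0")
  case False
  have A: "A \<in> carrier_mat n n" using Z by (simp add: Z_matrix_def)
  obtain i where i: "i < n" and min: "\<And>j. j < n \<Longrightarrow> x $ i / w $ i \<le> x $ j / w $ j"
    and le: "(A *\<^sub>v x) $ i \<le> x $ i / w $ i * (A *\<^sub>v w) $ i"
    using Z_matrix_mult_vec_at_min_ratio[OF Z w(1,2) x] False by blast
  have "0 < (A *\<^sub>v x) $ i" and Aw: "0 < (A *\<^sub>v w) $ i"
    using Ax w(3) A i by (auto simp: pos_vec_def)
  with le have "0 < x $ i / w $ i * (A *\<^sub>v w) $ i" by linarith
  with Aw have "0 < x $ i / w $ i" using zero_less_mult_iff[of "x $ i / w $ i" "(A *\<^sub>v w) $ i"] by linarith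
  then have xj: "0 < x $ j" if j: "j < n" for j
  proof -
    have "0 < x $ j / w $ j" using min[OF j] \<open>0 < x $ i / w $ i\<close> by linarith
    moreover have "0 < w $ j" using w j by (simp add: pos_vec_def)
    ultimately show ?thesis by (auto simp: zero_less_divide_iff)
  qed
  show ?thesis using x xj by (simp add: pos_vec_def)
qed (use x in \<open>auto simp: pos_vec_def\<close>)

lemma Z_matrix_inverse_nonneg:
  fixes A :: "real mat"
  assumes Z: "Z_matrix n A" and w: "w \<in> carrier_vec n" "pos_vec w" "pos_vec (A *\<^sub>v w)"
  shows "mat_inv A \<in> carrier_mat n n" "A * mat_inv A = 1\<^sub>m n" "mat_inv A * A = 1\<^sub>m n"
    "0\<^sub>m n n \<le> mat_inv A"
proof -
  note nonneg = Z_matrix_nonneg_if_mult_nonneg[OF Z w]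
  have A: "A \<in> carrier_mat n n" using Z by (simp add: Z_matrix_def)
  have "det A \<noteq> 0"
  proof
    assume "det A = 0"
    then obtain x where x: "x \<in> carrier_vec n" "x \<noteq> 0\<^sub>v n" "A *\<^sub>v x = 0\<^sub>v n"
      using det_0_iff_vec_prod_zero[OF A] by auto
    have "A *\<^sub>v (- x) = - (A *\<^sub>v x)" using A x(1) by (intro eq_vecI) (auto simp: sum_negf)
    then have "0\<^sub>v n \<le> x" "0\<^sub>v n \<le> - x" using nonneg[of x] nonneg[of "- x"] x by auto
    then have "x = 0\<^sub>v n" using x(1) by (intro eq_vecI) (auto simp: less_eq_vec_def intro: order.antisym)
    with x(2) show False ..
  qed
  note inv = mat_inv_if_det_nonzero[OF A this]
  show "mat_inv A \<in> carrier_mat n n" "A * mat_inv A = 1\<^sub>m n" "mat_inv A * A = 1\<^sub>m n"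
    by (fact inv)+
  have cols: "0\<^sub>v n \<le> col (mat_inv A) j" if j: "j < n" for j
  proof (rule nonneg)
    have col: "A *\<^sub>v col (mat_inv A) j = unit_vec n j"
      using col_mult2[OF A inv(1) j] inv(2) j by simp
    show "0\<^sub>v n \<le> A *\<^sub>v col (mat_inv A) j"
      unfolding col less_eq_vec_def using j by simp
  qed (rule col_carrier_vec[OF j inv(1)])
  have "0 \<le> mat_inv A $$ (i,j)" if "i < n" "j < n" for i j
  proof -
    have "0 \<le> col (mat_inv A) j $ i" using cols[OF that(2)] that(1) inv(1) by (simp add: less_eq_vec_def)
    then show ?thesis using inv(1) that by simp
  qed
  with inv(1) show "0\<^sub>m n n \<le> mat_inv A" by (simp add: nonneg_mat_iff)
qed

lemma geometric_sum_telescope: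
  fixes R :: "real mat" and K :: nat
  assumes R: "R \<in> carrier_mat n n" and e: "e \<in> carrier_vec n" and i: "i < n"
  defines "w \<equiv> vec n (\<lambda>j. \<Sum>k<K. (R ^\<^sub>m k *\<^sub>v e) $ j)"
  shows "w $ i - (R *\<^sub>v w) $ i = e $ i - (R ^\<^sub>m K *\<^sub>v e) $ i"
proof -
  have w: "w \<in> carrier_vec n" by (simp add: w_def)
  have "(R *\<^sub>v w) $ i = (\<Sum>j<n. R $$ (i,j) * (\<Sum>k<K. (R ^\<^sub>m k *\<^sub>v e) $ j))"
    unfolding index_mult_mat_vec_sum[OF R w i] by (intro sum.cong) (simp_all add: w_def)
  also have "\<dots> = (\<Sum>k<K. \<Sum>j<n. R $$ (i,j) * (R ^\<^sub>m k *\<^sub>v e) $ j)"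
    unfolding sum_distrib_left by (rule sum.swap)
  also have "\<dots> = (\<Sum>k<K. (R *\<^sub>v (R ^\<^sub>m k *\<^sub>v e)) $ i)"
    by (intro sum.cong refl, subst index_mult_mat_vec_sum[OF R _ i])
      (use mult_mat_vec_carrier[OF pow_carrier_mat[OF R] e] in auto)
  also have "\<dots> = (\<Sum>k<K. (R ^\<^sub>m Suc k *\<^sub>v e) $ i)"
    using R e by (simp add: pow_mat_Suc_left[OF R] assoc_mult_mat_vec[of R n n _ n] del: pow_mat.simps)
  finally have Rw: "(R *\<^sub>v w) $ i = (\<Sum>k<K. (R ^\<^sub>m Suc k *\<^sub>v e) $ i)" .
  have wi: "w $ i = (\<Sum>k<K. (R ^\<^sub>m k *\<^sub>v e) $ i)" using i by (simp add: w_def)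
  show ?thesis
    unfolding wi Rw sum_subtractf[symmetric] sum_lessThan_telescope'[of "\<lambda>k. (R ^\<^sub>m k *\<^sub>v e) $ i" K]
    using R e by simp
qed

lemma pos_vec_contracted_if_rho_less_1:
  fixes R :: "real mat"
  assumes R: "R \<in> carrier_mat n n" "0\<^sub>m n n \<le> R" and rho: "rho R < 1"
  obtains w where "w \<in> carrier_vec n" "pos_vec w" "pos_vec (w - R *\<^sub>v w)"
proof -
  define e where "e = vec n (\<lambda>_. 1 :: real)"
  have e: "e \<in> carrier_vec n" by (simp add: e_def)
  \<comment> \<open>w is a truncated Neumann series of e, cut off where the powers of R have become small.\<close>
  have lim: "(\<lambda>k. (R ^\<^sub>m k *\<^sub>v e) $ i) \<longlonglongrightarrow> 0" if i: "i < n" for i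
    unfolding index_mult_mat_vec_sum[OF pow_carrier_mat[OF R(1)] e i]
    using pow_mat_tendsto_0_if_rho_less_1[OF R(1) rho i] by (intro tendsto_null_sum) (auto simp: e_def)
  have "\<forall>\<^sub>F k in sequentially. (R ^\<^sub>m k *\<^sub>v e) $ i < 1" if "i < n" for i
    using lim[OF that] by (rule order_tendstoD) simp
  then have "\<forall>\<^sub>F k in sequentially. \<forall>i\<in>{..<n}. (R ^\<^sub>m k *\<^sub>v e) $ i < 1"
    by (simp add: eventually_ball_finite)
  then obtain N where N: "\<And>i. i < n \<Longrightarrow> (R ^\<^sub>m Suc N *\<^sub>v e) $ i < 1"
    unfolding eventually_sequentially by (meson le_SucI lessThan_iff order_refl)
  define w where "w = vec n (\<lambda>j. \<Sum>k<Suc N. (R ^\<^sub>m k *\<^sub>v e) $ j)"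
  show thesis
  proof
    show w: "w \<in> carrier_vec n" by (simp add: w_def)
    have "0 < w $ i" if "i < n" for i
    proof -
      have "0 \<le> (R ^\<^sub>m k *\<^sub>v e) $ i" for k
        using mult_mat_vec_nonneg[OF pow_carrier_mat[OF R(1)] pow_mat_nonneg[OF R] e, of k] that
        by (auto simp: e_def less_eq_vec_def)
      then have "(R ^\<^sub>m 0 *\<^sub>v e) $ i \<le> (\<Sum>k<Suc N. (R ^\<^sub>m k *\<^sub>v e) $ i)"
        by (intro member_le_sum) auto
      then have "1 \<le> w $ i" using that R(1) by (simp add: w_def e_def del: sum.lessThan_Suc)
      then show ?thesis by simp
    qed
    with w show "pos_vec w" by (simp add: pos_vec_def)
    show "pos_vec (w - R *\<^sub>v w)"
      using geometric_sum_telescope[OF R(1) e, of _ "Suc N"] N R(1) by (simp add: pos_vec_def w_def e_def)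
  qed
qed

lemma nonsing_M_matrix_pos_vec:
  fixes A :: "real mat"
  assumes AM: "nonsing_M_matrix n A" and n: "n > 0"
  obtains w where "w \<in> carrier_vec n" "pos_vec w" "pos_vec (A *\<^sub>v w)"
proof -
  obtain s N where N: "N \<in> carrier_mat n n" "0\<^sub>m n n \<le> N" and A: "A = s \<cdot>\<^sub>m 1\<^sub>m n - N"
    and s: "rho N < s"
    using AM unfolding nonsing_M_matrix_def by blast
  have "0 < s" using s rho_nonneg[OF N(1) n] by simp
  define R where "R = (1 / s) \<cdot>\<^sub>m N"
  have R: "R \<in> carrier_mat n n" "0\<^sub>m n n \<le> R"
    using N \<open>0 < s\<close> by (auto simp: R_def less_eq_mat_def)
  have "rho R * s \<le> rho N"
    using rho_smult_le[OF N(1) n, of "1 / s"] \<open>0 < s\<close> by (simp add: R_def field_simps)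
  then have "rho R * s < 1 * s" using s by simp
  then have "rho R < 1" using \<open>0 < s\<close> by simp
  then obtain w where w: "w \<in> carrier_vec n" "pos_vec w" "pos_vec (w - R *\<^sub>v w)"
    using pos_vec_contracted_if_rho_less_1[OF R] by blast
  have "A *\<^sub>v w = s \<cdot>\<^sub>v w - N *\<^sub>v w"
    unfolding A using N(1) w(1)
    by (simp add: minus_mult_distrib_mat_vec[of _ n n] smult_mat_mult_mat_vec[of "1\<^sub>m n" n n])
  moreover have "R *\<^sub>v w = (1 / s) \<cdot>\<^sub>v (N *\<^sub>v w)"
    unfolding R_def by (rule smult_mat_mult_mat_vec[OF N(1) w(1)])
  ultimately have "(A *\<^sub>v w) $ i = s * (w - R *\<^sub>v w) $ i" if "i < n" for i
    using that N(1) w(1) \<open>0 < s\<close> by (simp add: field_simps)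
  moreover have "0 < (w - R *\<^sub>v w) $ i" if "i < n" for i
    using pos_vecD[OF w(3)] that R(1) by simp
  ultimately have "0 < (A *\<^sub>v w) $ i" if "i < n" for i using that \<open>0 < s\<close> by simp
  then show thesis using that[OF w(1,2)] A N(1) by (simp add: pos_vec_def)
qed

lemma nonsing_M_matrix_inverse:
  fixes A :: "real mat"
  assumes AM: "nonsing_M_matrix n A" and n: "n > 0"
  shows "mat_inv A \<in> carrier_mat n n" "A * mat_inv A = 1\<^sub>m n" "mat_inv A * A = 1\<^sub>m n"
    "0\<^sub>m n n \<le> mat_inv A"
    and "\<And>y. y \<in> carrier_vec n \<Longrightarrow> pos_vec y \<Longrightarrow> pos_vec (mat_inv A *\<^sub>v y)"
proof -
  have Z: "Z_matrix n A" using AM by (simp add: nonsing_M_matrix_def)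
  obtain w where w: "w \<in> carrier_vec n" "pos_vec w" "pos_vec (A *\<^sub>v w)"
    using nonsing_M_matrix_pos_vec[OF AM n] by blast
  note inv = Z_matrix_inverse_nonneg[OF Z w]
  show "mat_inv A \<in> carrier_mat n n" "A * mat_inv A = 1\<^sub>m n" "mat_inv A * A = 1\<^sub>m n"
    "0\<^sub>m n n \<le> mat_inv A" by (fact inv)+
  fix y assume y: "y \<in> carrier_vec n" "pos_vec y"
  have A: "A \<in> carrier_mat n n" using Z by (simp add: Z_matrix_def)
  have "A *\<^sub>v (mat_inv A *\<^sub>v y) = y" using assoc_mult_mat_vec[OF A inv(1) y(1)] inv(2) y(1) by simp
  then show "pos_vec (mat_inv A *\<^sub>v y)"
    using Z_matrix_pos_if_mult_pos[OF Z w, of "mat_inv A *\<^sub>v y"] inv(1) y by simp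
qed

lemma nonsing_M_matrix_one_minus:
  fixes M :: "real mat"
  assumes M: "M \<in> carrier_mat n n" "0\<^sub>m n n \<le> M" and rho: "rho M < 1"
  shows "nonsing_M_matrix n (1\<^sub>m n - M)"
  unfolding nonsing_M_matrix_def Z_matrix_def
proof (intro conjI allI impI exI[of _ "1::real"] exI[of _ M])
  show "1\<^sub>m n - M = 1 \<cdot>\<^sub>m 1\<^sub>m n - M" using M(1) by (auto intro!: eq_matI)
qed (use M rho in \<open>auto simp: less_eq_mat_def\<close>)

lemma nonsing_M_matrix_one_minus_mult_nonpos:
  fixes X Y :: "real mat"
  assumes X: "X \<in> carrier_mat n n" "nonpos_mat X" and Y: "Y \<in> carrier_mat n n" "nonpos_mat Y"
    and u: "u \<in> carrier_vec n" "pos_vec u" and z: "z \<in> carrier_vec n" "pos_vec z" and n: "n > 0"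
    and Xu: "(- X) *\<^sub>v u \<le> u - z" and Yu: "(- Y) *\<^sub>v u \<le> u - z"
  shows "nonsing_M_matrix n (1\<^sub>m n - X * Y)"
proof -
  have XY: "X * Y = (- X) * (- Y)" using X Y by simp
  have nonneg: "0\<^sub>m n n \<le> - X" "0\<^sub>m n n \<le> - Y"
    using X Y nonpos_mat_iff_nonneg_uminus by auto
  then have XY_nonneg: "0\<^sub>m n n \<le> X * Y" unfolding XY using X Y by (intro mult_mat_nonneg) auto
  have "(- Y) *\<^sub>v u \<le> u" using Yu diff_le_self_if_pos_vec[OF z u(1)] by (rule order.trans)
  then have "(- X) *\<^sub>v ((- Y) *\<^sub>v u) \<le> (- X) *\<^sub>v u" using X u nonneg by (intro mult_mat_vec_mono) auto
  then have "X * Y *\<^sub>v u \<le> u - z"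
    unfolding XY using assoc_mult_mat_vec[of "- X" n n "- Y" n u] X Y u Xu by (auto intro: order.trans)
  then have "pos_vec (u - X * Y *\<^sub>v u)"
    using X Y u z by (intro pos_vec_diff_if_le_diff[of _ n z]) auto
  moreover have "map_mat abs (X * Y) = X * Y"
    using XY_nonneg X Y by (intro eq_matI) (auto simp: less_eq_mat_def)
  ultimately have "pos_vec (u - map_mat abs (X * Y) *\<^sub>v u)" by simp
  then have "rho (X * Y) < 1"
    using rho_less_1_if_abs_contracts[of "X * Y" n u] X Y u n by simp
  with XY_nonneg X Y show ?thesis by (intro nonsing_M_matrix_one_minus) auto
qed

section \<open>The quadratic matrix equations\<close>

fun quad_iter :: "real mat \<Rightarrow> real mat \<Rightarrow> nat \<Rightarrow> real mat" where
  "quad_iter P Q 0 = 0\<^sub>m (dim_row P) (dim_row P)"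
| "quad_iter P Q (Suc k) = P + Q * (quad_iter P Q k * quad_iter P Q k)"

context
  fixes P Q :: "real mat" and n :: nat
  assumes P: "P \<in> carrier_mat n n" "0\<^sub>m n n \<le> P"
    and Q: "Q \<in> carrier_mat n n" "0\<^sub>m n n \<le> Q"
begin

lemma quad_iter_carrier: "quad_iter P Q k \<in> carrier_mat n n"
  using P Q by (induction k) auto

lemma quad_iter_nonneg_mono: "0\<^sub>m n n \<le> quad_iter P Q k \<and> quad_iter P Q k \<le> quad_iter P Q (Suc k)"
proof (induction k)
  case 0
  show ?case using P Q mult_mat_nonneg[OF Q(1) _ Q(2), of "0\<^sub>m n n" n] by (simp add: less_eq_mat_def)
next
  case (Suc k)
  let ?S = "quad_iter P Q"
  note S = quad_iter_carrier
  have "?S k * ?S k \<le> ?S (Suc k) * ?S (Suc k)"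
    using Suc by (intro mult_mat_mono[OF S S S S]) auto
  moreover have "0\<^sub>m n n \<le> ?S k * ?S k" using Suc by (intro mult_mat_nonneg[OF S S]) auto
  ultimately have "Q * (?S k * ?S k) \<le> Q * (?S (Suc k) * ?S (Suc k))"
    using Q by (intro mult_mat_mono[OF Q(1) Q(1) mult_carrier_mat[OF S S] mult_carrier_mat[OF S S]]) auto
  then have "?S (Suc k) \<le> ?S (Suc (Suc k))"
    using P Q quad_iter_carrier by (auto simp: less_eq_mat_def)
  with Suc show ?case by (auto intro: order_trans)
qed

lemma quad_iter_mult_vec_le:
  assumes u: "u \<in> carrier_vec n" "0\<^sub>v n \<le> u" and PQu: "P *\<^sub>v u + Q *\<^sub>v u \<le> u"
  shows "quad_iter P Q k *\<^sub>v u \<le> u"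
proof (induction k)
  case 0
  show ?case using P(1) u by (auto simp: less_eq_vec_def)
next
  case (Suc k)
  let ?S = "quad_iter P Q k"
  have S: "?S \<in> carrier_mat n n" "0\<^sub>m n n \<le> ?S"
    using quad_iter_carrier quad_iter_nonneg_mono by auto
  have "?S *\<^sub>v (?S *\<^sub>v u) \<le> ?S *\<^sub>v u"
    using Suc u by (intro mult_mat_vec_mono[OF S]) auto
  then have "Q *\<^sub>v (?S *\<^sub>v (?S *\<^sub>v u)) \<le> Q *\<^sub>v u"
    using Suc u S(1) by (intro mult_mat_vec_mono[OF Q]) (auto intro: order_trans)
  moreover have "quad_iter P Q (Suc k) *\<^sub>v u = P *\<^sub>v u + Q *\<^sub>v (?S *\<^sub>v (?S *\<^sub>v u))"
    using P(1) Q(1) S(1) u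
    by (simp add: add_mult_distrib_mat_vec[of _ n n] assoc_mult_mat_vec[of _ n n _ n])
  ultimately show ?case
    using PQu P(1) Q(1) S(1) u by (simp add: less_eq_vec_def) (meson add_left_mono order_trans)
qed

lemma quad_iter_converges:
  assumes u: "u \<in> carrier_vec n" "pos_vec u" and PQu: "P *\<^sub>v u + Q *\<^sub>v u \<le> u"
  obtains W where "W \<in> carrier_mat n n"
    "\<And>i j. i < n \<Longrightarrow> j < n \<Longrightarrow> (\<lambda>k. quad_iter P Q k $$ (i,j)) \<longlonglongrightarrow> W $$ (i,j)"
proof -
  let ?S = "quad_iter P Q"
  note S = quad_iter_carrier
  have S_nonneg: "0 \<le> ?S k $$ (i,j)" if "i < n" "j < n" for i j k
    using quad_iter_nonneg_mono[of k] that S[of k] by (auto simp: less_eq_mat_def)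
  have upos: "0 < u $ j" if "j < n" for j using u that by (simp add: pos_vec_def)
  have "0\<^sub>v n \<le> u" using u(1) upos by (auto simp: less_eq_vec_def less_imp_le)
  note Su = quad_iter_mult_vec_le[OF u(1) this PQu]
  have S_bound: "?S k $$ (i,j) \<le> u $ i / u $ j" if ij: "i < n" "j < n" for i j k
  proof -
    have "?S k $$ (i,j) * u $ j \<le> (\<Sum>l<n. ?S k $$ (i,l) * u $ l)"
      by (rule member_le_sum) (use ij in \<open>auto intro!: mult_nonneg_nonneg S_nonneg less_imp_le[OF upos]\<close>)
    also have "\<dots> \<le> u $ i"
      using Su[of k] ij S[of k] u(1) by (simp add: index_mult_mat_vec_sum[symmetric] less_eq_vec_def)
    finally show ?thesis using upos[OF ij(2)] by (simp add: pos_le_divide_eq)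
  qed
  have "(\<lambda>k. ?S k $$ (i,j)) \<longlonglongrightarrow> (SUP k. ?S k $$ (i,j))" if ij: "i < n" "j < n" for i j
  proof (rule LIMSEQ_incseq_SUP)
    show "bdd_above (range (\<lambda>k. ?S k $$ (i,j)))"
      using S_bound[OF ij] by (intro bdd_aboveI[of _ "u $ i / u $ j"]) auto
    have "?S k $$ (i,j) \<le> ?S (Suc k) $$ (i,j)" for k
      using quad_iter_nonneg_mono[of k] S[of k] ij by (simp add: less_eq_mat_def del: quad_iter.simps)
    then show "incseq (\<lambda>k. ?S k $$ (i,j))" by (rule incseq_SucI)
  qed
  then show thesis by (intro that[of "mat n n (\<lambda>(i,j). SUP k. ?S k $$ (i,j))"]) auto
qed

lemma quad_iter_limit:
  assumes u: "u \<in> carrier_vec n" "pos_vec u" and PQu: "P *\<^sub>v u + Q *\<^sub>v u \<le> u"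
  obtains W where "W \<in> carrier_mat n n" "0\<^sub>m n n \<le> W" "W = P + Q * (W * W)" "W *\<^sub>v u \<le> u"
proof -
  let ?S = "quad_iter P Q"
  note S = quad_iter_carrier
  obtain W where W: "W \<in> carrier_mat n n"
    and lim: "\<And>i j. i < n \<Longrightarrow> j < n \<Longrightarrow> (\<lambda>k. ?S k $$ (i,j)) \<longlonglongrightarrow> W $$ (i,j)"
    using quad_iter_converges[OF u PQu] by blast
  show thesis
  proof
    show "W \<in> carrier_mat n n" by (fact W)
    have "0 \<le> ?S k $$ (i,j)" if "i < n" "j < n" for i j k
      using quad_iter_nonneg_mono[of k] that S[of k] by (auto simp: less_eq_mat_def)
    then show "0\<^sub>m n n \<le> W"
      using W by (auto simp: less_eq_mat_def intro: LIMSEQ_le_const[OF lim])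
    have "(\<lambda>k. ?S (Suc k) $$ (i,j)) \<longlonglongrightarrow> (P + Q * (W * W)) $$ (i,j)" if ij: "i < n" "j < n" for i j
    proof -
      have "(\<lambda>k. (Q * (?S k * ?S k)) $$ (i,j)) \<longlonglongrightarrow> (Q * (W * W)) $$ (i,j)"
        using Q(1) S W lim ij mult_carrier_mat[OF S S] mult_carrier_mat[OF W W]
        by (intro tendsto_index_mult_mat[where n = n and m = n]) (auto intro: tendsto_index_mult_mat)
      moreover have "?S (Suc k) $$ (i,j) = P $$ (i,j) + (Q * (?S k * ?S k)) $$ (i,j)" for k
        using P(1) Q(1) S[of k] ij by simp
      moreover have "(P + Q * (W * W)) $$ (i,j) = P $$ (i,j) + (Q * (W * W)) $$ (i,j)"
        using P(1) Q(1) W ij by simp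
      ultimately show ?thesis by (simp only:) (intro tendsto_add tendsto_const)
    qed
    then show "W = P + Q * (W * W)"
      using LIMSEQ_unique[OF LIMSEQ_Suc[OF lim]] P(1) Q(1) W by (intro eq_matI) auto
    have "0\<^sub>v n \<le> u" using u by (auto simp: pos_vec_def less_eq_vec_def less_imp_le)
    note Su = quad_iter_mult_vec_le[OF u(1) this PQu]
    have "(W *\<^sub>v u) $ i \<le> u $ i" if i: "i < n" for i
    proof (rule LIMSEQ_le_const2)
      show "(\<lambda>k. (?S k *\<^sub>v u) $ i) \<longlonglongrightarrow> (W *\<^sub>v u) $ i"
        unfolding index_mult_mat_vec_sum[OF S u(1) i] index_mult_mat_vec_sum[OF W u(1) i]
        using i by (intro tendsto_sum tendsto_mult_right lim) auto
      have "(?S k *\<^sub>v u) $ i \<le> u $ i" for k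
        using Su[of k] i u(1) unfolding less_eq_vec_def by auto
      then show "\<exists>N. \<forall>k\<ge>N. (?S k *\<^sub>v u) $ i \<le> u $ i" by blast
    qed
    then show "W *\<^sub>v u \<le> u" using W u(1) by (simp add: less_eq_vec_def)
  qed
qed

end

lemma nonneg_fixpoint_mult_vec_le:
  fixes P Q F :: "real mat"
  assumes P: "P \<in> carrier_mat n n" and Q: "Q \<in> carrier_mat n n" "0\<^sub>m n n \<le> Q"
    and F: "F \<in> carrier_mat n n" "0\<^sub>m n n \<le> F" and F_fix: "F = P + Q * (F * F)"
    and u: "u \<in> carrier_vec n" and Fu: "F *\<^sub>v u \<le> u"
  shows "F *\<^sub>v u \<le> P *\<^sub>v u + Q *\<^sub>v u"
proof -
  have "F *\<^sub>v (F *\<^sub>v u) \<le> F *\<^sub>v u" by (rule mult_mat_vec_mono[OF F Fu u])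
  also note Fu
  finally have QFFu: "Q *\<^sub>v (F *\<^sub>v (F *\<^sub>v u)) \<le> Q *\<^sub>v u" by (rule mult_mat_vec_mono[OF Q _ u])
  have "F *\<^sub>v u = (P + Q * (F * F)) *\<^sub>v u" using F_fix by (rule arg_cong)
  also have "\<dots> = P *\<^sub>v u + Q *\<^sub>v (F *\<^sub>v (F *\<^sub>v u))"
    using P Q F u by (simp add: add_mult_distrib_mat_vec[of _ n n] assoc_mult_mat_vec[of _ n n _ n])
  finally have Fu_eq: "F *\<^sub>v u = P *\<^sub>v u + Q *\<^sub>v (F *\<^sub>v (F *\<^sub>v u))" .
  show ?thesis by (subst Fu_eq) (use QFFu P Q F u in \<open>auto simp: less_eq_vec_def\<close>)
qed

lemma max_nonpos_fixpoint_bounds: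
  fixes P Q X :: "real mat"
  assumes P: "P \<in> carrier_mat n n" "0\<^sub>m n n \<le> P" and Q: "Q \<in> carrier_mat n n" "0\<^sub>m n n \<le> Q"
    and u: "u \<in> carrier_vec n" "pos_vec u" and PQu: "P *\<^sub>v u + Q *\<^sub>v u \<le> u"
    and X: "X \<in> carrier_mat n n" "nonpos_mat X" and X_fix: "X = - P - Q * (X * X)"
    and max: "\<And>Y. Y \<in> carrier_mat n n \<Longrightarrow> nonpos_mat Y \<Longrightarrow> Y = - P - Q * (Y * Y) \<Longrightarrow> Y \<le> X"
  shows "X \<le> - P" "(- X) *\<^sub>v u \<le> P *\<^sub>v u + Q *\<^sub>v u"
proof -
  define F where "F = - X"
  have F: "F \<in> carrier_mat n n" "0\<^sub>m n n \<le> F"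
    using X nonpos_mat_iff_nonneg_uminus by (auto simp: F_def)
  have XX: "X * X = F * F" using X(1) by (simp add: F_def)
  have QFF: "Q * (F * F) \<in> carrier_mat n n" "0\<^sub>m n n \<le> Q * (F * F)"
    using Q F by (auto intro: mult_mat_nonneg)
  have "- F = X" using X(1) by (simp add: F_def)
  also note X_fix
  finally have F_fix: "F = P + Q * (F * F)"
    unfolding XX using uminus_eq_diff_iff[OF F(1) P(1) QFF(1)] by simp
  have "P \<le> F"
    using QFF P(1) by (subst F_fix) (auto simp: less_eq_mat_def)
  then show "X \<le> - P" using X(1) P(1) by (force simp: less_eq_mat_def F_def)
  obtain W where W: "W \<in> carrier_mat n n" "0\<^sub>m n n \<le> W" "W = P + Q * (W * W)" "W *\<^sub>v u \<le> u"
    using quad_iter_limit[OF P Q u PQu] by blast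
  have "- W \<le> X"
  proof (rule max)
    have "- W * - W = W * W" using W(1) by simp
    moreover have "- W = - P - Q * (W * W)"
      using uminus_eq_diff_iff[OF W(1) P(1) mult_carrier_mat[OF Q(1) mult_carrier_mat[OF W(1) W(1)]]] W(3)
      by blast
    ultimately show "- W = - P - Q * (- W * - W)" by simp
  qed (use W nonpos_mat_iff_nonneg_uminus in auto)
  then have "F \<le> W" using X(1) W(1) by (force simp: F_def less_eq_mat_def)
  have u0: "0\<^sub>v n \<le> u" using u by (auto simp: pos_vec_def less_eq_vec_def less_imp_le)
  have "F *\<^sub>v u \<le> W *\<^sub>v u" by (rule mult_mat_vec_left_mono[OF F(1) \<open>F \<le> W\<close> u(1) u0])
  also note W(4)
  finally have Fu: "F *\<^sub>v u \<le> u" .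
  show "(- X) *\<^sub>v u \<le> P *\<^sub>v u + Q *\<^sub>v u"
    unfolding F_def[symmetric] by (rule nonneg_fixpoint_mult_vec_le[OF P(1) Q F F_fix u(1) Fu])
qed

context
  fixes B Bi C :: "real mat" and n :: nat
  assumes B: "B \<in> carrier_mat n n" "Bi \<in> carrier_mat n n" "B * Bi = 1\<^sub>m n" "Bi * B = 1\<^sub>m n"
    and C: "C \<in> carrier_mat n n"
begin

lemma solvent_iff_fixpoint:
  assumes Y: "Y \<in> carrier_mat n n"
  shows "Y * Y + B * Y + C = 0\<^sub>m n n \<longleftrightarrow> Y = - (Bi * C) - Bi * (Y * Y)"
proof -
  have "Bi * (B * Y) = Y"
    using B Y by (simp add: assoc_mult_mat[OF B(2) B(1) Y, symmetric])
  then have "Bi * (Y * Y + B * Y + C) = Bi * (Y * Y) + Y + Bi * C"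
    using B C Y by (simp add: mult_add_distrib_mat[of _ n n _ n])
  then have "Y * Y + B * Y + C = 0\<^sub>m n n \<longleftrightarrow> Bi * (Y * Y) + Y + Bi * C = 0\<^sub>m n n"
    using left_invertible_mult_eq_0_iff[OF B(1-3), of "Y * Y + B * Y + C" n] B C Y by simp
  also have "\<dots> \<longleftrightarrow> Y = - (Bi * C) - Bi * (Y * Y)"
    by (rule add_eq_0_iff_eq_diff) (use B C Y in auto)
  finally show ?thesis .
qed

lemma dual_solvent_iff_fixpoint:
  assumes Y: "Y \<in> carrier_mat n n"
  shows "C * (Y * Y) + B * Y + 1\<^sub>m n = 0\<^sub>m n n \<longleftrightarrow> Y = - Bi - (Bi * C) * (Y * Y)"
proof -
  have "Bi * (B * Y) = Y"
    using B Y by (simp add: assoc_mult_mat[OF B(2) B(1) Y, symmetric])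
  moreover have "Bi * (C * (Y * Y)) = (Bi * C) * (Y * Y)"
    using B C Y by (simp add: assoc_mult_mat[of Bi n n C n "Y * Y" n])
  ultimately have "Bi * (C * (Y * Y) + B * Y + 1\<^sub>m n) = (Bi * C) * (Y * Y) + Y + Bi"
    using B C Y by (simp add: mult_add_distrib_mat[of _ n n _ n])
  then have "C * (Y * Y) + B * Y + 1\<^sub>m n = 0\<^sub>m n n \<longleftrightarrow> (Bi * C) * (Y * Y) + Y + Bi = 0\<^sub>m n n"
    using left_invertible_mult_eq_0_iff[OF B(1-3), of "C * (Y * Y) + B * Y + 1\<^sub>m n" n] B C Y by simp
  also have "\<dots> \<longleftrightarrow> Y = - Bi - (Bi * C) * (Y * Y)"
    by (rule add_eq_0_iff_eq_diff) (use B C Y in auto)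
  finally show ?thesis .
qed

lemma max_nonpos_solvent_fixpoint:
  assumes "max_nonpos_solvent n B C Phi"
  shows "Phi \<in> carrier_mat n n" "nonpos_mat Phi" "Phi = - (Bi * C) - Bi * (Phi * Phi)"
    "\<And>Y. Y \<in> carrier_mat n n \<Longrightarrow> nonpos_mat Y \<Longrightarrow> Y = - (Bi * C) - Bi * (Y * Y) \<Longrightarrow> Y \<le> Phi"
  using assms solvent_iff_fixpoint unfolding max_nonpos_solvent_def by auto

lemma max_nonpos_solvent_dual_fixpoint:
  assumes "max_nonpos_solvent_dual n B C Psi"
  shows "Psi \<in> carrier_mat n n" "nonpos_mat Psi" "Psi = - Bi - (Bi * C) * (Psi * Psi)"
    "\<And>Y. Y \<in> carrier_mat n n \<Longrightarrow> nonpos_mat Y \<Longrightarrow> Y = - Bi - (Bi * C) * (Y * Y) \<Longrightarrow> Y \<le> Psi"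
  using assms dual_solvent_iff_fixpoint unfolding max_nonpos_solvent_dual_def by auto

end

theorem theorem3p4:
  fixes n :: nat and B C Phi Psi :: "real mat" and u :: "real vec"
  assumes n: "n > 0"
    and BC: "B \<in> carrier_mat n n" "C \<in> carrier_mat n n"
    and B_M: "nonsing_M_matrix n B"
    and C_M: "M_matrix n C"
    and BiC: "0\<^sub>m n n \<le> mat_inv B * C"
    and BCI: "nonsing_M_matrix n (B - C - 1\<^sub>m n)"
    and Phi: "max_nonpos_solvent n B C Phi"
    and Psi: "max_nonpos_solvent_dual n B C Psi"
    and u: "u \<in> carrier_vec n" "pos_vec u"
    and v: "pos_vec ((B - C - 1\<^sub>m n) *\<^sub>v u)"
  shows "Phi \<le> - (mat_inv B * C) \<and> - (mat_inv B * C) \<le> 0\<^sub>m n n \<and>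
         (- Phi) *\<^sub>v u \<le> u - mat_inv B *\<^sub>v ((B - C - 1\<^sub>m n) *\<^sub>v u) \<and>
         Psi \<le> - mat_inv B \<and> - mat_inv B \<le> 0\<^sub>m n n \<and>
         (- Psi) *\<^sub>v u \<le> u - mat_inv B *\<^sub>v ((B - C - 1\<^sub>m n) *\<^sub>v u) \<and>
         rho Phi < 1 \<and> rho Psi < 1 \<and>
         nonsing_M_matrix n (1\<^sub>m n - Phi * Psi) \<and>
         nonsing_M_matrix n (1\<^sub>m n - Psi * Phi)"
proof -
  note B = BC(1) and C = BC(2)
  note Bi = nonsing_M_matrix_inverse[OF B_M n]
  define G where "G = mat_inv B * C"
  have G: "G \<in> carrier_mat n n" "0\<^sub>m n n \<le> G" using Bi(1) C BiC by (auto simp: G_def)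
  define z where "z = mat_inv B *\<^sub>v ((B - C - 1\<^sub>m n) *\<^sub>v u)"
  have "(B - C - 1\<^sub>m n) *\<^sub>v u \<in> carrier_vec n"
    using B C u(1) by (intro mult_mat_vec_carrier[of _ n n] minus_carrier_mat) auto
  then have z: "z \<in> carrier_vec n" "pos_vec z" using Bi(1) Bi(5)[OF _ v] by (auto simp: z_def)
  have split: "G *\<^sub>v u + mat_inv B *\<^sub>v u = u - z"
    unfolding G_def z_def by (rule left_inverse_mult_vec_diff[OF B C Bi(1,3) u(1)])
  have PQ: "G *\<^sub>v u + mat_inv B *\<^sub>v u \<le> u" unfolding split by (rule diff_le_self_if_pos_vec[OF z u(1)])
  have comm: "mat_inv B *\<^sub>v u + G *\<^sub>v u = G *\<^sub>v u + mat_inv B *\<^sub>v u"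
    using G(1) Bi(1) u(1) by (intro comm_add_vec[of _ n]) auto
  note Phi_fix = max_nonpos_solvent_fixpoint[OF B Bi(1-3) C Phi, folded G_def]
  note Psi_fix = max_nonpos_solvent_dual_fixpoint[OF B Bi(1-3) C Psi, folded G_def]
  note Phi_bounds = max_nonpos_fixpoint_bounds[OF G Bi(1,4) u PQ Phi_fix, unfolded split]
  note Psi_bounds = max_nonpos_fixpoint_bounds[OF Bi(1,4) G u PQ[folded comm] Psi_fix, unfolded comm split]
  have "- G \<le> 0\<^sub>m n n" "- mat_inv B \<le> 0\<^sub>m n n"
    using uminus_le_0_iff_nonneg[OF G(1)] uminus_le_0_iff_nonneg[OF Bi(1)] G(2) Bi(4) by blast+
  moreover note rho_nonpos_less_1[OF Phi_fix(1,2) n u z Phi_bounds(2)]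
    rho_nonpos_less_1[OF Psi_fix(1,2) n u z Psi_bounds(2)]
  moreover note
    nonsing_M_matrix_one_minus_mult_nonpos[OF Phi_fix(1,2) Psi_fix(1,2) u z n Phi_bounds(2) Psi_bounds(2)]
    nonsing_M_matrix_one_minus_mult_nonpos[OF Psi_fix(1,2) Phi_fix(1,2) u z n Psi_bounds(2) Phi_bounds(2)]
  ultimately show ?thesis using Phi_bounds Psi_bounds by (simp add: G_def z_def)
qed

end
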